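(* Let $\mathfrak{g}_1$ and $\mathfrak{g}_2$ be characteristically nilpotent Lie algebras which are both $S$-algebras. Then the product by generators $\mathfrak{g}_1 \underline{\times} \mathfrak{g}_2$ is also a characteristically nilpotent Lie algebra.
   Context: All Lie algebras are finite-dimensional, complex, nilpotent and nonabelian. For a Lie algebra $\mathfrak{g}$ write $C^1\mathfrak{g}=[\mathfrak{g},\mathfrak{g}]$, $C^{k+1}\mathfrak{g}=[\mathfrak{g},C^k\mathfrak{g}]$, and $Z(\mathfrak{g})$ for the center. A nilpotent Lie algebra $\mathfrak{g}$ is characteristically nilpotent if there is $m$ with $\mathfrak{g}^{[m]}=0$, where $\mathfrak{g}^{[1]}=\mathrm{Der}(\mathfrak{g})(\mathfrak{g})=\{f(Y): f\in \mathrm{Der}(\mathfrak{g}), Y\in\mathfrak{g}\}$ and $\mathfrak{g}^{[k]}=\mathrm{Der}(\mathfrak{g})(\mathfrak{g}^{[k-1]})$ (equivalently, $\mathrm{Der}(\mathfrak{g})$ is nilpotent). Product by generators: let $\mathfrak{g}_1,\mathfrak{g}_2$ have dimensions $m_1,m_2$, with bases $\{X_1,\dots,X_{m_1}\}$ of $\mathfrak{g}_1$ and $\{X'_1,\dots,X'_{m_2}\}$ of $\mathfrak{g}_2$ such that $X_1,\dots,X_{n_1}$ generate $\mathfrak{g}_1$ and $X_{n_1+1},\dots,X_{m_1}$ span $C^1\mathfrak{g}_1$, and similarly $X'_1,\dots,X'_{n_2}$ generate $\mathfrak{g}_2$ and the remaining $X'_j$ span $C^1\mathfrak{g}_2$.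 Then $\mathfrak{g}_1\underline{\times}\mathfrak{g}_2$ is the Lie algebra on the vector space $\mathfrak{g}_1\oplus\mathfrak{g}_2\oplus\mathfrak{g}_3$, $\mathfrak{g}_3=\langle Z_1,\dots,Z_{n_1n_2}\rangle$, whose brackets are those of $\mathfrak{g}_1$ on $\mathfrak{g}_1$, those of $\mathfrak{g}_2$ on $\mathfrak{g}_2$, $[X_i,X'_j]=Z_{(i-1)n_2+j}$ for $1\le i\le n_1$, $1\le j\le n_2$, $[X_i,X'_j]=0$ if $i>n_1$ or $j>n_2$, and $\mathfrak{g}_3$ central (this is the central extension of $\mathfrak{g}_1\oplus\mathfrak{g}_2$ by the 2-cocycle $\varphi(X_i,X'_j)=e_{(i-1)n_2+j}$ with values in $\mathbb{C}^{n_1n_2}$). For $i=1,2,3$ let $p_i$ be the projection of $\mathfrak{g}_1\underline{\times}\mathfrak{g}_2=\mathfrak{g}_1\oplus\mathfrak{g}_2\oplus\mathfrak{g}_3$ onto $\mathfrak{g}_i$, and for a derivation $D$ write $D_{ij}=p_iDp_j$. A nilpotent Lie algebra $\mathfrak{g}_1$ is an $S$-algebra if for every Lie algebra $\mathfrak{g}_2$ and every derivation $D$ of $\mathfrak{g}_1\underline{\times}\mathfrak{g}_2$ one has $D_{21}(\mathfrak{g}_1)\subset C^1\mathfrak{g}_2$. *)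

theory Defs
  imports Complex_Main "HOL-Library.Function_Algebras"
begin

text \<open>A complex Lie algebra of dimension m is given by structure constants c with
respect to a basis e_0,...,e_(m-1); vectors are coordinate functions nat => complex
vanishing at indices >= m.  c i j k is the e_k coordinate of [e_i, e_j].\<close>

definition vecs :: "nat \<Rightarrow> (nat \<Rightarrow> complex) set" where
  "vecs m = {v. \<forall>k\<ge>m. v k = 0}"

definition unitv :: "nat \<Rightarrow> nat \<Rightarrow> complex" where
  "unitv i = (\<lambda>k. if k = i then 1 else 0)"

definition cspan :: "(nat \<Rightarrow> complex) set \<Rightarrow> (nat \<Rightarrow> complex) set" where
  "cspan S = {(\<Sum>u\<in>F. (\<lambda>k. a u * u k)) | F a. finite F \<and> F \<subseteq> S}"

definition lie_br :: "nat \<Rightarrow> (nat \<Rightarrow> nat \<Rightarrow> nat \<Rightarrow> complex)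
    \<Rightarrow> (nat \<Rightarrow> complex) \<Rightarrow> (nat \<Rightarrow> complex) \<Rightarrow> (nat \<Rightarrow> complex)" where
  "lie_br m c x y = (\<lambda>k. \<Sum>i<m. \<Sum>j<m. x i * y j * c i j k)"

definition is_lie_alg :: "nat \<Rightarrow> (nat \<Rightarrow> nat \<Rightarrow> nat \<Rightarrow> complex) \<Rightarrow> bool" where
  "is_lie_alg m c \<longleftrightarrow>
     (\<forall>i j k. (m \<le> i \<or> m \<le> j \<or> m \<le> k) \<longrightarrow> c i j k = 0) \<and>
     (\<forall>i j k. c i j k = - c j i k) \<and>
     (\<forall>x\<in>vecs m. \<forall>y\<in>vecs m. \<forall>z\<in>vecs m.
        lie_br m c x (lie_br m c y z) + lie_br m c y (lie_br m c z x)
          + lie_br m c z (lie_br m c x y) = 0)"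

primrec lcs :: "nat \<Rightarrow> (nat \<Rightarrow> nat \<Rightarrow> nat \<Rightarrow> complex) \<Rightarrow> nat \<Rightarrow> (nat \<Rightarrow> complex) set" where
  "lcs m c 0 = vecs m"
| "lcs m c (Suc k) = cspan {lie_br m c x y | x y. x \<in> vecs m \<and> y \<in> lcs m c k}"

definition lie_nilpotent :: "nat \<Rightarrow> (nat \<Rightarrow> nat \<Rightarrow> nat \<Rightarrow> complex) \<Rightarrow> bool" where
  "lie_nilpotent m c \<longleftrightarrow> (\<exists>k. lcs m c k = {0})"

definition lie_nonabelian :: "nat \<Rightarrow> (nat \<Rightarrow> nat \<Rightarrow> nat \<Rightarrow> complex) \<Rightarrow> bool" where
  "lie_nonabelian m c \<longleftrightarrow> lcs m c 1 \<noteq> {0}"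

definition is_derivation :: "nat \<Rightarrow> (nat \<Rightarrow> nat \<Rightarrow> nat \<Rightarrow> complex)
    \<Rightarrow> ((nat \<Rightarrow> complex) \<Rightarrow> (nat \<Rightarrow> complex)) \<Rightarrow> bool" where
  "is_derivation m c D \<longleftrightarrow>
     (\<forall>x\<in>vecs m. D x \<in> vecs m) \<and>
     (\<forall>a x y. x \<in> vecs m \<longrightarrow> y \<in> vecs m \<longrightarrow>
        D (\<lambda>k. a * x k + y k) = (\<lambda>k. a * D x k + D y k)) \<and>
     (\<forall>x\<in>vecs m. \<forall>y\<in>vecs m.
        D (lie_br m c x y) = lie_br m c (D x) y + lie_br m c x (D y))"

primrec der_series :: "nat \<Rightarrow> (nat \<Rightarrow> nat \<Rightarrow> nat \<Rightarrow> complex) \<Rightarrow> nat \<Rightarrow> (nat \<Rightarrow> complex) set" where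
  "der_series m c 0 = vecs m"
| "der_series m c (Suc k) = {D y | D y. is_derivation m c D \<and> y \<in> der_series m c k}"

definition char_nilpotent :: "nat \<Rightarrow> (nat \<Rightarrow> nat \<Rightarrow> nat \<Rightarrow> complex) \<Rightarrow> bool" where
  "char_nilpotent m c \<longleftrightarrow> is_lie_alg m c \<and> lie_nilpotent m c \<and>
     (\<exists>k\<ge>1. der_series m c k = {0})"

text \<open>Adapted basis: e_0..e_(n-1) generate, e_n..e_(m-1) span C^1.\<close>
definition adapted :: "nat \<Rightarrow> nat \<Rightarrow> (nat \<Rightarrow> nat \<Rightarrow> nat \<Rightarrow> complex) \<Rightarrow> bool" where
  "adapted m n c \<longleftrightarrow> n \<le> m \<and> lcs m c 1 = cspan (unitv ` {n..<m})"

text \<open>Product by generators. Coordinates: [0,m1) for g1, [m1,m1+m2) for g2,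
  m1+m2+i*n2+j for Z corresponding to [X_i, X'_j] (0-based, i<n1, j<n2).\<close>
definition prod_gen :: "nat \<Rightarrow> nat \<Rightarrow> (nat \<Rightarrow> nat \<Rightarrow> nat \<Rightarrow> complex)
    \<Rightarrow> nat \<Rightarrow> nat \<Rightarrow> (nat \<Rightarrow> nat \<Rightarrow> nat \<Rightarrow> complex) \<Rightarrow> (nat \<Rightarrow> nat \<Rightarrow> nat \<Rightarrow> complex)" where
  "prod_gen m1 n1 c1 m2 n2 c2 = (\<lambda>i j k.
     if i < m1 \<and> j < m1 \<and> k < m1 then c1 i j k
     else if m1 \<le> i \<and> i < m1 + m2 \<and> m1 \<le> j \<and> j < m1 + m2 \<and> m1 \<le> k \<and> k < m1 + m2
       then c2 (i - m1) (j - m1) (k - m1)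
     else if i < n1 \<and> m1 \<le> j \<and> j < m1 + n2 \<and> k = m1 + m2 + i * n2 + (j - m1) then 1
     else if j < n1 \<and> m1 \<le> i \<and> i < m1 + n2 \<and> k = m1 + m2 + j * n2 + (i - m1) then -1
     else 0)"

definition prod_dim :: "nat \<Rightarrow> nat \<Rightarrow> nat \<Rightarrow> nat \<Rightarrow> nat" where
  "prod_dim m1 n1 m2 n2 = m1 + m2 + n1 * n2"

definition proj2 :: "nat \<Rightarrow> nat \<Rightarrow> (nat \<Rightarrow> complex) \<Rightarrow> (nat \<Rightarrow> complex)" where
  "proj2 m1 m2 v = (\<lambda>k. if k < m2 then v (m1 + k) else 0)"

text \<open>Vectors of g1
  (coordinates < m1) are literally vectors of the product.\<close>
definition S_algebra :: "nat \<Rightarrow> nat \<Rightarrow> (nat \<Rightarrow> nat \<Rightarrow> nat \<Rightarrow> complex) \<Rightarrow> bool" where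
  "S_algebra m1 n1 c1 \<longleftrightarrow>
     (\<forall>m2 n2 c2. is_lie_alg m2 c2 \<and> lie_nilpotent m2 c2 \<and> lie_nonabelian m2 c2
        \<and> adapted m2 n2 c2 \<longrightarrow>
       (\<forall>D. is_derivation (prod_dim m1 n1 m2 n2) (prod_gen m1 n1 c1 m2 n2 c2) D \<longrightarrow>
          (\<forall>x\<in>vecs m1. proj2 m1 m2 (D x) \<in> lcs m2 c2 1)))"

end

theory Submission
  imports Defs
begin

text \<open>A derivation \<open>D\<close> of the product is studied through its blocks: \<open>pr1 \<circ> D\<close> restricted to \<open>g\<^sub>1\<close>
  and \<open>pr2 \<circ> D \<circ> inj2\<close> are derivations of the factors, and the S-algebra property of \<open>g\<^sub>1\<close>
  forces \<open>D\<close> to map \<open>g\<^sub>1\<close> into \<open>g\<^sub>1 + C\<^sup>1 g\<^sub>2 + Z\<close>, where \<open>Z\<close> is the new centre.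
  Characteristic nilpotence is expressed by annihilation levels: a vector lies in level \<open>a\<close> if every
  composite of \<open>a\<close> derivations kills it.  If \<open>k\<close> derivations kill both factors, the Leibniz rule and
  induction on levels bound successively \<open>C\<^sup>1 g\<^sub>1\<close>, the brackets \<open>[C\<^sup>1 g\<^sub>2, g\<^sub>2]\<close>, the mixed
  brackets \<open>[g\<^sub>1, g\<^sub>2]\<close> (which span \<open>Z\<close>), \<open>C\<^sup>1 g\<^sub>2\<close>, \<open>g\<^sub>1\<close> and \<open>g\<^sub>2\<close>; so \<open>7k\<close> derivations kill the
  whole product.\<close>

lemma sum_fun_apply: "(\<Sum>u\<in>F. f u) k = (\<Sum>u\<in>F. f u k)"
  for f :: "'a \<Rightarrow> nat \<Rightarrow> 'b::comm_monoid_add"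
  by (induction F rule: infinite_finite_induct) auto

definition is_subspace :: "(nat \<Rightarrow> complex) set \<Rightarrow> bool" where
  "is_subspace S \<longleftrightarrow> 0 \<in> S \<and> (\<forall>a x y. x \<in> S \<longrightarrow> y \<in> S \<longrightarrow> (\<lambda>k. a * x k + y k) \<in> S)"

lemma is_subspaceI:
  assumes "0 \<in> S" and "\<And>a x y. x \<in> S \<Longrightarrow> y \<in> S \<Longrightarrow> (\<lambda>k. a * x k + y k) \<in> S"
  shows "is_subspace S"
  using assms unfolding is_subspace_def by blast

lemma subspace_zero: "is_subspace S \<Longrightarrow> 0 \<in> S"
  unfolding is_subspace_def by blast

lemma subspace_lincomb: "is_subspace S \<Longrightarrow> x \<in> S \<Longrightarrow> y \<in> S \<Longrightarrow> (\<lambda>k. a * x k + y k) \<in> S"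
  unfolding is_subspace_def by blast

lemma subspace_add: "is_subspace S \<Longrightarrow> x \<in> S \<Longrightarrow> y \<in> S \<Longrightarrow> x + y \<in> S"
  using subspace_lincomb[of S x y 1] by (simp add: plus_fun_def)

lemma subspace_vecs: "is_subspace (vecs m)"
  by (auto simp: is_subspace_def vecs_def)

lemma lincomb_map_zero:
  fixes f :: "(nat \<Rightarrow> complex) \<Rightarrow> nat \<Rightarrow> complex"
  assumes "0 \<in> T"
    and lin: "\<And>a x y. x \<in> T \<Longrightarrow> y \<in> T \<Longrightarrow> f (\<lambda>k. a * x k + y k) = (\<lambda>k. a * f x k + f y k)"
  shows "f 0 = 0"
proof -
  have "(\<lambda>k. 1 * (0::nat \<Rightarrow> complex) k + 0 k) = 0"
    by (simp add: fun_eq_iff)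
  then have "f 0 = (\<lambda>k. 1 * f 0 k + f 0 k)"
    using lin[of 0 0 1] assms(1) by simp
  then show "f 0 = 0"
    by (metis add_cancel_left_right fun_eq_iff mult_1 zero_fun_apply)
qed

lemma subspace_preimage:
  assumes T: "is_subspace T" and S: "is_subspace S"
    and lin: "\<And>a x y. x \<in> T \<Longrightarrow> y \<in> T \<Longrightarrow> f (\<lambda>k. a * x k + y k) = (\<lambda>k. a * f x k + f y k)"
  shows "is_subspace {v \<in> T. f v \<in> S}"
proof (rule is_subspaceI)
  show "0 \<in> {v \<in> T. f v \<in> S}"
  proof -
    have "f 0 = 0"
      using subspace_zero[OF T] lin by (rule lincomb_map_zero)
    then show ?thesis
      using subspace_zero[OF T] subspace_zero[OF S] by simp
  qed
next
  fix a x y assume "x \<in> {v \<in> T. f v \<in> S}" "y \<in> {v \<in> T. f v \<in> S}"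
  then show "(\<lambda>k. a * x k + y k) \<in> {v \<in> T. f v \<in> S}"
    using lin subspace_lincomb[OF T] subspace_lincomb[OF S] by simp
qed

lemma cspan_superset: "G \<subseteq> cspan G"
proof
  fix u assume "u \<in> G"
  then show "u \<in> cspan G"
    unfolding cspan_def by (intro CollectI exI[of _ "{u}"] exI[of _ "\<lambda>_. 1"]) auto
qed

lemma cspan_subset:
  assumes S: "is_subspace S" and G: "G \<subseteq> S"
  shows "cspan G \<subseteq> S"
proof
  fix v assume "v \<in> cspan G"
  then obtain F a where v: "v = (\<Sum>u\<in>F. (\<lambda>k. a u * u k))" and F: "finite F" "F \<subseteq> G"
    unfolding cspan_def by blast
  from F have "(\<Sum>u\<in>F. (\<lambda>k. a u * u k)) \<in> S"
  proof (induction F rule: finite_induct)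
    case empty
    then show ?case using subspace_zero[OF S] by (simp add: zero_fun_def)
  next
    case (insert u F)
    then have "(\<lambda>k. a u * u k + (\<Sum>u\<in>F. (\<lambda>k. a u * u k)) k) \<in> S"
      using G by (intro subspace_lincomb[OF S]) auto
    then show ?case
      using insert by (simp add: plus_fun_def)
  qed
  then show "v \<in> S" using v by simp
qed

lemma subspace_cspan: "is_subspace (cspan G)"
proof (rule is_subspaceI)
  show "0 \<in> cspan G"
    unfolding cspan_def by (intro CollectI exI[of _ "{}"]) auto
next
  fix s x y assume "x \<in> cspan G" "y \<in> cspan G"
  then obtain F a H b where x: "x = (\<Sum>u\<in>F. (\<lambda>k. a u * u k))" and F: "finite F" "F \<subseteq> G"
    and y: "y = (\<Sum>u\<in>H. (\<lambda>k. b u * u k))" and H: "finite H" "H \<subseteq> G"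
    unfolding cspan_def by blast
  define e where "e u = s * (if u \<in> F then a u else 0) + (if u \<in> H then b u else 0)" for u
  have "(\<Sum>u\<in>F \<union> H. (\<lambda>k. e u * u k)) k = s * x k + y k" for k
  proof -
    have "(\<Sum>u\<in>F \<union> H. e u * u k)
        = (\<Sum>u\<in>F \<union> H. s * (if u \<in> F then a u * u k else 0) + (if u \<in> H then b u * u k else 0))"
      by (rule sum.cong) (simp_all add: e_def algebra_simps)
    also have "\<dots> = s * (\<Sum>u\<in>F \<union> H. if u \<in> F then a u * u k else 0)
          + (\<Sum>u\<in>F \<union> H. if u \<in> H then b u * u k else 0)"
      by (simp only: sum.distrib sum_distrib_left)
    also have "\<dots> = s * (\<Sum>u\<in>F. a u * u k) + (\<Sum>u\<in>H. b u * u k)"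
      using F(1) H(1) by (simp add: sum.If_cases Int_absorb1 Int_absorb2)
    finally show ?thesis
      using x y by (simp add: sum_fun_apply)
  qed
  then show "(\<lambda>k. s * x k + y k) \<in> cspan G"
    unfolding cspan_def using F H
    by (intro CollectI exI[of _ "F \<union> H"] exI[of _ e]) (auto simp: fun_eq_iff)
qed

lemma unitv_inj: "inj unitv"
  by (rule injI) (metis unitv_def zero_neq_one)

lemma in_cspan_unitv:
  assumes A: "finite A" and supp: "\<And>k. k \<notin> A \<Longrightarrow> v k = 0"
  shows "v \<in> cspan (unitv ` A)"
proof -
  have "(\<Sum>i\<in>A. (\<lambda>k. v i * unitv i k)) k = v k" for k
    using A supp by (cases "k \<in> A") (simp_all add: sum_fun_apply unitv_def if_distrib[of "\<lambda>t. _ * t"] cong: if_cong)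
  then have "v = (\<Sum>u\<in>unitv ` A. (\<lambda>k. v (inv unitv u) * u k))"
    by (simp add: sum.reindex inj_on_subset[OF unitv_inj] inv_f_f[OF unitv_inj] fun_eq_iff)
  then show ?thesis
    unfolding cspan_def using A by (intro CollectI exI[of _ "unitv ` A"] exI) auto
qed

section \<open>Brackets, the lower central series and derivations\<close>

declare lcs.simps(2)[simp del]

lemma lie_br_add_left: "lie_br m c (x + y) z = lie_br m c x z + lie_br m c y z"
  unfolding lie_br_def plus_fun_def by (simp add: algebra_simps sum.distrib)

lemma lie_br_add_right: "lie_br m c z (x + y) = lie_br m c z x + lie_br m c z y"
  unfolding lie_br_def plus_fun_def by (simp add: algebra_simps sum.distrib)

lemma lie_br_zero_left [simp]: "lie_br m c 0 z = 0"
  unfolding lie_br_def by (simp add: zero_fun_def)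

lemma lie_br_zero_right [simp]: "lie_br m c z 0 = 0"
  unfolding lie_br_def by (simp add: zero_fun_def)

lemma lie_br_antisym:
  assumes "\<And>i j k. c i j k = - c j i k"
  shows "lie_br m c y x = - lie_br m c x y"
proof
  fix k
  have "lie_br m c y x k = (\<Sum>j<m. \<Sum>i<m. y i * x j * c i j k)"
    unfolding lie_br_def by (rule sum.swap)
  also have "\<dots> = (\<Sum>j<m. \<Sum>i<m. - (x j * y i * c j i k))"
    by (intro sum.cong refl) (metis assms mult.commute mult_minus_right)
  also have "\<dots> = - lie_br m c x y k"
    by (simp add: lie_br_def sum_negf)
  finally show "lie_br m c y x k = (- lie_br m c x y) k"
    by simp
qed

lemma sum_unitv_mult: "(\<Sum>j<m. unitv a j * f j) = (if a < m then f a else 0)"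
proof -
  have "(\<Sum>j<m. unitv a j * f j) = (\<Sum>j<m. if j = a then f j else 0)"
    by (rule sum.cong) (simp_all add: unitv_def)
  then show ?thesis by simp
qed

lemma lie_br_unitv: "lie_br m c (unitv i) (unitv j) k = (if i < m \<and> j < m then c i j k else 0)"
proof -
  have "lie_br m c (unitv i) (unitv j) k = (\<Sum>i'<m. unitv i i' * (\<Sum>j'<m. unitv j j' * c i' j' k))"
    by (simp add: lie_br_def sum_distrib_left mult.assoc)
  then show ?thesis
    by (simp add: sum_unitv_mult)
qed

lemma is_lie_alg_vanish: "is_lie_alg m c \<Longrightarrow> m \<le> i \<or> m \<le> j \<or> m \<le> k \<Longrightarrow> c i j k = 0"
  unfolding is_lie_alg_def by blast

lemma is_lie_alg_antisym: "is_lie_alg m c \<Longrightarrow> c i j k = - c j i k"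
  unfolding is_lie_alg_def by blast

lemma is_lie_alg_jacobi:
  "is_lie_alg m c \<Longrightarrow> x \<in> vecs m \<Longrightarrow> y \<in> vecs m \<Longrightarrow> z \<in> vecs m \<Longrightarrow>
   lie_br m c x (lie_br m c y z) + lie_br m c y (lie_br m c z x) + lie_br m c z (lie_br m c x y) = 0"
  unfolding is_lie_alg_def by blast

lemma lie_br_vecs: "is_lie_alg m c \<Longrightarrow> lie_br m c x y \<in> vecs m"
  unfolding vecs_def lie_br_def by (simp add: is_lie_alg_vanish)

lemma lcs_Suc_subset:
  assumes "is_subspace S" and "\<And>x y. x \<in> vecs m \<Longrightarrow> y \<in> lcs m c k \<Longrightarrow> lie_br m c x y \<in> S"
  shows "lcs m c (Suc k) \<subseteq> S"
  unfolding lcs.simps by (rule cspan_subset[OF assms(1)]) (use assms(2) in blast)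

lemma lie_br_in_lcs_Suc: "x \<in> vecs m \<Longrightarrow> y \<in> lcs m c k \<Longrightarrow> lie_br m c x y \<in> lcs m c (Suc k)"
  unfolding lcs.simps by (rule cspan_superset[THEN subsetD]) blast

lemma lie_br_in_lcs1: "x \<in> vecs m \<Longrightarrow> y \<in> vecs m \<Longrightarrow> lie_br m c x y \<in> lcs m c 1"
  using lie_br_in_lcs_Suc[of x m y c 0] by simp

lemma subspace_lcs: "is_subspace (lcs m c k)"
  by (cases k) (simp_all add: subspace_vecs lcs.simps subspace_cspan)

lemma lcs_subset_vecs:
  assumes "is_lie_alg m c"
  shows "lcs m c k \<subseteq> vecs m"
proof (cases k)
  case (Suc l)
  show ?thesis
    unfolding Suc by (rule lcs_Suc_subset[OF subspace_vecs lie_br_vecs[OF assms]])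
qed simp

lemma lcs_eq_zero_mono:
  assumes "lcs m c k = {0}" and "k \<le> l"
  shows "lcs m c l = {0}"
  using assms(2)
proof (induction l rule: dec_induct)
  case (step l)
  have "is_subspace {0 :: nat \<Rightarrow> complex}"
    by (rule is_subspaceI) (simp_all add: zero_fun_def)
  moreover have "lie_br m c x y \<in> {0}" if "y \<in> lcs m c l" for x y
  proof -
    have "y = 0" using that step.IH by blast
    then show ?thesis by simp
  qed
  ultimately have "lcs m c (Suc l) \<subseteq> {0}"
    by (rule lcs_Suc_subset)
  then show ?case
    using subspace_zero[OF subspace_lcs] by blast
qed (rule assms(1))

definition vecs_between :: "nat \<Rightarrow> nat \<Rightarrow> (nat \<Rightarrow> complex) set" where
  "vecs_between n m = {v \<in> vecs m. \<forall>k<n. v k = 0}"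

lemma subspace_vecs_between: "is_subspace (vecs_between n m)"
  by (auto simp: is_subspace_def vecs_between_def vecs_def)

lemma adapted_lcs1: "adapted m n c \<Longrightarrow> lcs m c 1 = vecs_between n m"
proof -
  assume "adapted m n c"
  then have lcs1: "lcs m c 1 = cspan (unitv ` {n..<m})"
    by (simp add: adapted_def)
  have "cspan (unitv ` {n..<m}) \<subseteq> vecs_between n m"
    by (rule cspan_subset[OF subspace_vecs_between]) (auto simp: vecs_between_def vecs_def unitv_def)
  moreover have "vecs_between n m \<subseteq> cspan (unitv ` {n..<m})"
    by (auto simp: vecs_between_def vecs_def intro!: in_cspan_unitv)
  ultimately show ?thesis
    using lcs1 by blast
qed

lemma adapted_struct_const_gen:
  assumes "is_lie_alg m c" and "adapted m n c" and "k < n"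
  shows "c i j k = 0"
proof (cases "i < m \<and> j < m")
  case True
  then have "unitv i \<in> vecs m" "unitv j \<in> vecs m"
    by (auto simp: vecs_def unitv_def)
  then have "lie_br m c (unitv i) (unitv j) \<in> vecs_between n m"
    using lie_br_in_lcs1 adapted_lcs1[OF assms(2)] by blast
  then show ?thesis
    using True \<open>k < n\<close> by (simp add: vecs_between_def lie_br_unitv)
qed (use is_lie_alg_vanish[OF assms(1)] in auto)

lemma is_derivationI:
  assumes "\<And>x. x \<in> vecs m \<Longrightarrow> D x \<in> vecs m"
    and "\<And>a x y. x \<in> vecs m \<Longrightarrow> y \<in> vecs m \<Longrightarrow> D (\<lambda>k. a * x k + y k) = (\<lambda>k. a * D x k + D y k)"
    and "\<And>x y. x \<in> vecs m \<Longrightarrow> y \<in> vecs m \<Longrightarrow>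
      D (lie_br m c x y) = lie_br m c (D x) y + lie_br m c x (D y)"
  shows "is_derivation m c D"
  using assms unfolding is_derivation_def by blast

lemma derivation_vecs: "is_derivation m c D \<Longrightarrow> x \<in> vecs m \<Longrightarrow> D x \<in> vecs m"
  by (simp add: is_derivation_def)

lemma derivation_lincomb:
  "is_derivation m c D \<Longrightarrow> x \<in> vecs m \<Longrightarrow> y \<in> vecs m \<Longrightarrow>
   D (\<lambda>k. a * x k + y k) = (\<lambda>k. a * D x k + D y k)"
  by (simp add: is_derivation_def)

lemma derivation_lie_br:
  "is_derivation m c D \<Longrightarrow> x \<in> vecs m \<Longrightarrow> y \<in> vecs m \<Longrightarrow>
   D (lie_br m c x y) = lie_br m c (D x) y + lie_br m c x (D y)"
  by (simp add: is_derivation_def)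

lemma derivation_zero: "is_derivation m c D \<Longrightarrow> D 0 = 0"
  using subspace_zero[OF subspace_vecs] derivation_lincomb by (rule lincomb_map_zero)

lemma zero_is_derivation: "is_derivation m c (\<lambda>_. 0)"
  by (simp add: is_derivation_def vecs_def zero_fun_def[symmetric])

lemma derivation_lcs1:
  assumes lie: "is_lie_alg m c" and D: "is_derivation m c D" and y: "y \<in> lcs m c 1"
  shows "D y \<in> lcs m c 1"
proof -
  have "lcs m c (Suc 0) \<subseteq> {v \<in> vecs m. D v \<in> lcs m c 1}"
  proof (rule lcs_Suc_subset)
    show "is_subspace {v \<in> vecs m. D v \<in> lcs m c 1}"
      by (rule subspace_preimage[OF subspace_vecs subspace_lcs derivation_lincomb[OF D]])
  next
    fix x z assume x: "x \<in> vecs m" and "z \<in> lcs m c 0"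
    then have z: "z \<in> vecs m" by simp
    have "D (lie_br m c x z) = lie_br m c (D x) z + lie_br m c x (D z)"
      by (rule derivation_lie_br[OF D x z])
    also have "\<dots> \<in> lcs m c 1"
      using derivation_vecs[OF D] x z by (intro subspace_add[OF subspace_lcs] lie_br_in_lcs1) auto
    finally show "lie_br m c x z \<in> {v \<in> vecs m. D v \<in> lcs m c 1}"
      using lie_br_vecs[OF lie] by simp
  qed
  then show ?thesis using y by auto
qed

section \<open>Annihilation by iterated derivations\<close>

primrec der_killed :: "nat \<Rightarrow> (nat \<Rightarrow> nat \<Rightarrow> nat \<Rightarrow> complex) \<Rightarrow> nat \<Rightarrow> (nat \<Rightarrow> complex) set" where
  "der_killed m c 0 = {0}"
| "der_killed m c (Suc a) = {y \<in> vecs m. \<forall>D. is_derivation m c D \<longrightarrow> D y \<in> der_killed m c a}"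

lemma der_killed_SucI:
  "y \<in> vecs m \<Longrightarrow> (\<And>D. is_derivation m c D \<Longrightarrow> D y \<in> der_killed m c a) \<Longrightarrow> y \<in> der_killed m c (Suc a)"
  by simp

lemma der_killed_SucD: "is_derivation m c D \<Longrightarrow> y \<in> der_killed m c (Suc a) \<Longrightarrow> D y \<in> der_killed m c a"
  by simp

lemma der_killed_vecs: "y \<in> der_killed m c a \<Longrightarrow> y \<in> vecs m"
  by (cases a) (auto simp: vecs_def)

lemma subspace_der_killed: "is_subspace (der_killed m c a)"
proof (induction a)
  case 0
  show ?case by (rule is_subspaceI) (simp_all add: zero_fun_def)
next
  case (Suc a)
  show ?case
  proof (rule is_subspaceI)
    have "D 0 \<in> der_killed m c a" if "is_derivation m c D" for D
      using derivation_zero[OF that] subspace_zero[OF Suc.IH] by simp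
    then show "0 \<in> der_killed m c (Suc a)"
      using subspace_zero[OF subspace_vecs] by simp
  next
    fix s x y assume x: "x \<in> der_killed m c (Suc a)" and y: "y \<in> der_killed m c (Suc a)"
    have "D (\<lambda>k. s * x k + y k) \<in> der_killed m c a" if D: "is_derivation m c D" for D
      using x y D subspace_lincomb[OF Suc.IH] by (simp add: derivation_lincomb[OF D])
    then show "(\<lambda>k. s * x k + y k) \<in> der_killed m c (Suc a)"
      using x y subspace_lincomb[OF subspace_vecs] by simp
  qed
qed

lemma der_killed_Suc_mono: "der_killed m c a \<subseteq> der_killed m c (Suc a)"
proof (induction a)
  case 0
  have "D 0 \<in> der_killed m c 0" if "is_derivation m c D" for D
    using derivation_zero[OF that] by simp
  then show ?case
    using subspace_zero[OF subspace_vecs] by auto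
next
  case (Suc a)
  show ?case
  proof
    fix y assume "y \<in> der_killed m c (Suc a)"
    then show "y \<in> der_killed m c (Suc (Suc a))"
      using Suc.IH der_killed_vecs by (intro der_killed_SucI) auto
  qed
qed

lemma der_killed_mono:
  assumes "y \<in> der_killed m c a" and "a \<le> b"
  shows "y \<in> der_killed m c b"
  using assms(2) by (induction b rule: dec_induct) (use assms(1) der_killed_Suc_mono in blast)+

lemma der_series_SucI: "is_derivation m c D \<Longrightarrow> y \<in> der_series m c j \<Longrightarrow> D y \<in> der_series m c (Suc j)"
  by auto

lemma der_series_vecs: "y \<in> der_series m c j \<Longrightarrow> y \<in> vecs m"
  by (induction j arbitrary: y) (auto simp: derivation_vecs)

lemma der_series_zero_imp_killed:
  assumes "der_series m c k = {0}"
  shows "vecs m \<subseteq> der_killed m c k"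
proof -
  have "y \<in> der_killed m c i" if "y \<in> der_series m c j" "j + i = k" for i j y
    using that
  proof (induction i arbitrary: j y)
    case 0
    then have "y \<in> der_series m c k" by simp
    then have "y = 0" using assms by blast
    then show ?case by (simp only: der_killed.simps(1) singleton_iff)
  next
    case (Suc i)
    show ?case
    proof (rule der_killed_SucI)
      show "y \<in> vecs m" by (rule der_series_vecs[OF Suc.prems(1)])
      fix D assume "is_derivation m c D"
      then have "D y \<in> der_series m c (Suc j)" using Suc.prems(1) by (rule der_series_SucI)
      moreover have "Suc j + i = k" using Suc.prems(2) by simp
      ultimately show "D y \<in> der_killed m c i" by (rule Suc.IH)
    qed
  qed
  then show ?thesis
    by (metis add_0 der_series.simps(1) subsetI)
qed

lemma killed_imp_der_series_zero:
  assumes "vecs m \<subseteq> der_killed m c k"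
  shows "der_series m c k = {0}"
proof -
  have "der_series m c j \<subseteq> der_killed m c (k - j)" if "j \<le> k" for j
    using that
  proof (induction j)
    case (Suc j)
    show ?case
    proof
      fix y assume "y \<in> der_series m c (Suc j)"
      then obtain D y' where "y = D y'" "is_derivation m c D" "y' \<in> der_series m c j"
        by auto
      moreover have "k - j = Suc (k - Suc j)"
        using Suc.prems by simp
      ultimately show "y \<in> der_killed m c (k - Suc j)"
        using Suc der_killed_SucD by (metis Suc_leD subsetD)
    qed
  qed (use assms in simp)
  moreover have "0 \<in> der_series m c j" for j
    by (induction j) (auto simp: vecs_def intro!: exI[of _ "\<lambda>_. 0"] zero_is_derivation)
  ultimately show ?thesis by fastforce
qed

lemma char_nilpotent_iff_killed:
  "char_nilpotent m c \<longleftrightarrow> is_lie_alg m c \<and> lie_nilpotent m c \<and> (\<exists>k. vecs m \<subseteq> der_killed m c k)"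
proof -
  have "(\<exists>k\<ge>1. der_series m c k = {0}) \<longleftrightarrow> (\<exists>k. vecs m \<subseteq> der_killed m c k)"
  proof
    assume "\<exists>k. vecs m \<subseteq> der_killed m c k"
    then obtain k where "vecs m \<subseteq> der_killed m c k" by blast
    then have "vecs m \<subseteq> der_killed m c (Suc k)"
      using der_killed_Suc_mono by blast
    then have "der_series m c (Suc k) = {0}"
      by (rule killed_imp_der_series_zero)
    then show "\<exists>k\<ge>1. der_series m c k = {0}"
      by (intro exI[of _ "Suc k"]) simp
  qed (use der_series_zero_imp_killed in blast)
  then show ?thesis
    unfolding char_nilpotent_def by blast
qed

section \<open>The product by generators\<close>

lemma mult_add_less: "i < n1 \<Longrightarrow> j < n2 \<Longrightarrow> i * n2 + j < n1 * (n2::nat)"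
proof -
  assume "i < n1" "j < n2"
  then have "i * n2 + j < (i + 1) * n2" by simp
  also have "\<dots> \<le> n1 * n2" using \<open>i < n1\<close> by (intro mult_right_mono) auto
  finally show ?thesis .
qed

lemma sum_shift: "(\<Sum>i\<in>{a..<a+b}. g i) = (\<Sum>i<b. g (a+i))" for g :: "nat \<Rightarrow> 'a::comm_monoid_add"
  by (induction b) (auto simp: add.commute)

lemma double_sum_restrict:
  fixes f :: "nat \<Rightarrow> nat \<Rightarrow> complex"
  assumes "a + b \<le> M"
    and "\<And>i j. i < M \<Longrightarrow> j < M \<Longrightarrow> \<not> (a \<le> i \<and> i < a + b \<and> a \<le> j \<and> j < a + b) \<Longrightarrow> f i j = 0"
  shows "(\<Sum>i<M. \<Sum>j<M. f i j) = (\<Sum>i<b. \<Sum>j<b. f (a + i) (a + j))"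
proof -
  have "(\<Sum>i<M. \<Sum>j<M. f i j) = (\<Sum>i\<in>{a..<a+b}. \<Sum>j<M. f i j)"
  proof (rule sum.mono_neutral_right)
    show "\<forall>i\<in>{..<M} - {a..<a+b}. (\<Sum>j<M. f i j) = 0"
      using assms(2) by auto
  qed (use assms(1) in auto)
  also have "\<dots> = (\<Sum>i\<in>{a..<a+b}. \<Sum>j\<in>{a..<a+b}. f i j)"
  proof (rule sum.cong[OF refl], rule sum.mono_neutral_right)
    show "\<forall>j\<in>{..<M} - {a..<a+b}. f i j = 0" if "i \<in> {a..<a+b}" for i
      using assms that by auto
  qed (use assms(1) in auto)
  finally show ?thesis
    by (simp add: sum_shift)
qed

locale prod_by_generators =
  fixes m1 n1 :: nat and c1 :: "nat \<Rightarrow> nat \<Rightarrow> nat \<Rightarrow> complex"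
    and m2 n2 :: nat and c2 :: "nat \<Rightarrow> nat \<Rightarrow> nat \<Rightarrow> complex"
  assumes lie1: "is_lie_alg m1 c1" and adapted1: "adapted m1 n1 c1"
    and lie2: "is_lie_alg m2 c2" and adapted2: "adapted m2 n2 c2"
begin

abbreviation "pdim \<equiv> prod_dim m1 n1 m2 n2"
abbreviation "pc \<equiv> prod_gen m1 n1 c1 m2 n2 c2"
abbreviation "pbr \<equiv> lie_br pdim pc"
abbreviation "pr2 \<equiv> proj2 m1 m2"

text \<open>Vectors of \<open>g\<^sub>1\<close> are literally vectors of the product, so only \<open>g\<^sub>2\<close> needs an embedding.\<close>

definition pr1 :: "(nat \<Rightarrow> complex) \<Rightarrow> nat \<Rightarrow> complex" where
  "pr1 v = (\<lambda>k. if k < m1 then v k else 0)"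

definition inj2 :: "(nat \<Rightarrow> complex) \<Rightarrow> nat \<Rightarrow> complex" where
  "inj2 w = (\<lambda>k. if m1 \<le> k \<and> k < m1 + m2 then w (k - m1) else 0)"

definition pr3 :: "(nat \<Rightarrow> complex) \<Rightarrow> nat \<Rightarrow> complex" where
  "pr3 v = (\<lambda>k. if m1 + m2 \<le> k then v k else 0)"

lemma n1_le_m1: "n1 \<le> m1"
  using adapted1 by (simp add: adapted_def)

lemma n2_le_m2: "n2 \<le> m2"
  using adapted2 by (simp add: adapted_def)

lemma pdim_eq: "pdim = m1 + m2 + n1 * n2"
  by (simp add: prod_dim_def)

lemma lcs1_2_eq: "lcs m2 c2 1 = vecs_between n2 m2"
  by (rule adapted_lcs1[OF adapted2])

lemma lcs1_2_vecs: "u \<in> lcs m2 c2 1 \<Longrightarrow> u \<in> vecs m2"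
  using lcs_subset_vecs[OF lie2] by blast

lemma pc_low: "k < m1 \<Longrightarrow> pc i j k = (if i < m1 \<and> j < m1 then c1 i j k else 0)"
  by (auto simp: prod_gen_def)

lemma pc_mid: "k < m2 \<Longrightarrow> pc i j (m1 + k) =
    (if m1 \<le> i \<and> i < m1 + m2 \<and> m1 \<le> j \<and> j < m1 + m2 then c2 (i - m1) (j - m1) k else 0)"
  by (auto simp: prod_gen_def)

lemma pc_high_nonzero: "m1 + m2 \<le> k \<Longrightarrow> pc i j k \<noteq> 0 \<Longrightarrow>
    (i < n1 \<and> m1 \<le> j \<and> j < m1 + n2) \<or> (j < n1 \<and> m1 \<le> i \<and> i < m1 + n2)"
  by (auto simp: prod_gen_def split: if_splits)

lemma pc_high_left: "m1 + m2 \<le> i \<Longrightarrow> pc i j k = 0"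
  using n1_le_m1 n2_le_m2 by (auto simp: prod_gen_def)

lemma pc_high_right: "m1 + m2 \<le> j \<Longrightarrow> pc i j k = 0"
  using n1_le_m1 n2_le_m2 by (auto simp: prod_gen_def)

lemma pc_nongen2_left: "m1 + n2 \<le> i \<Longrightarrow> j < m1 \<Longrightarrow> pc i j k = 0"
  using n1_le_m1 n2_le_m2 by (auto simp: prod_gen_def)

lemma pc_nongen2_right: "m1 + n2 \<le> j \<Longrightarrow> i < m1 \<Longrightarrow> pc i j k = 0"
  using n1_le_m1 n2_le_m2 by (auto simp: prod_gen_def)

lemma pc_gen_coord: "k < n1 \<or> (m1 \<le> k \<and> k < m1 + n2) \<Longrightarrow> pc i j k = 0"
proof -
  assume k: "k < n1 \<or> (m1 \<le> k \<and> k < m1 + n2)"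
  show ?thesis
  proof (cases "k < n1")
    case True
    then show ?thesis
      using n1_le_m1 pc_low[of k i j] adapted_struct_const_gen[OF lie1 adapted1] by simp
  next
    case False
    then obtain k' where "k = m1 + k'" "k' < n2"
      using k by (metis le_add_diff_inverse nat_add_left_cancel_less)
    then show ?thesis
      using n2_le_m2 pc_mid[of k' i j] adapted_struct_const_gen[OF lie2 adapted2] by simp
  qed
qed

lemma pc_vanish: "pdim \<le> i \<or> pdim \<le> j \<or> pdim \<le> k \<Longrightarrow> pc i j k = 0"
proof -
  assume h: "pdim \<le> i \<or> pdim \<le> j \<or> pdim \<le> k"
  have central: "k \<noteq> m1 + m2 + i * n2 + (j - m1)" if "i < n1" "m1 \<le> j" "j < m1 + n2" "pdim \<le> k" for i j
  proof -
    have "i * n2 + (j - m1) < n1 * n2"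
      using that by (intro mult_add_less) auto
    then show ?thesis
      using that(4) unfolding pdim_eq by linarith
  qed
  have c1: "c1 i j k = 0" if "m1 \<le> i \<or> m1 \<le> j \<or> m1 \<le> k" for i j k
    using is_lie_alg_vanish[OF lie1] that by blast
  have c2: "c2 i j k = 0" if "m2 \<le> i \<or> m2 \<le> j \<or> m2 \<le> k" for i j k
    using is_lie_alg_vanish[OF lie2] that by blast
  show ?thesis
    using h n1_le_m1 n2_le_m2 central unfolding prod_gen_def pdim_eq by (auto simp: c1 c2)
qed

lemma pc_antisym: "pc i j k = - pc j i k"
  using is_lie_alg_antisym[OF lie1, of i j k] is_lie_alg_antisym[OF lie2, of "i - m1" "j - m1" "k - m1"]
    n1_le_m1
  unfolding prod_gen_def by auto

lemma vecs1_vecs: "x \<in> vecs m1 \<Longrightarrow> x \<in> vecs pdim"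
  by (auto simp: vecs_def pdim_eq)

lemma pr1_vecs: "pr1 v \<in> vecs m1"
  by (auto simp: vecs_def pr1_def)

lemma pr2_vecs: "pr2 v \<in> vecs m2"
  by (auto simp: vecs_def proj2_def)

lemma inj2_vecs: "inj2 w \<in> vecs pdim"
  by (auto simp: vecs_def pdim_eq inj2_def)

lemma pr1_vecs1 [simp]: "x \<in> vecs m1 \<Longrightarrow> pr1 x = x"
  by (auto simp: vecs_def pr1_def)

lemma pr2_vecs1 [simp]: "x \<in> vecs m1 \<Longrightarrow> pr2 x = 0"
  by (auto simp: vecs_def proj2_def)

lemma pr2_inj2 [simp]: "w \<in> vecs m2 \<Longrightarrow> pr2 (inj2 w) = w"
  by (auto simp: vecs_def proj2_def inj2_def)

lemma pr1_inj2 [simp]: "pr1 (inj2 w) = 0"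
  by (auto simp: pr1_def inj2_def)

lemma pr3_inj2 [simp]: "pr3 (inj2 w) = 0"
  by (auto simp: pr3_def inj2_def)

lemma inj2_zero [simp]: "inj2 0 = 0"
  by (auto simp: inj2_def)

lemma pr1_add: "pr1 (v + w) = pr1 v + pr1 w"
  by (auto simp: pr1_def)

lemma pr2_add: "pr2 (v + w) = pr2 v + pr2 w"
  by (auto simp: proj2_def)

lemma pr3_add: "pr3 (v + w) = pr3 v + pr3 w"
  by (auto simp: pr3_def)

lemma pr1_lincomb: "pr1 (\<lambda>k. a * v k + w k) = (\<lambda>k. a * pr1 v k + pr1 w k)"
  by (auto simp: pr1_def)

lemma pr2_lincomb: "pr2 (\<lambda>k. a * v k + w k) = (\<lambda>k. a * pr2 v k + pr2 w k)"
  by (auto simp: proj2_def)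

lemma pr3_lincomb: "pr3 (\<lambda>k. a * v k + w k) = (\<lambda>k. a * pr3 v k + pr3 w k)"
  by (auto simp: pr3_def)

lemma inj2_lincomb: "inj2 (\<lambda>k. a * v k + w k) = (\<lambda>k. a * inj2 v k + inj2 w k)"
  by (auto simp: inj2_def)

lemma vec_decomp: "v \<in> vecs pdim \<Longrightarrow> v = pr1 v + inj2 (pr2 v) + pr3 v"
  by (auto simp: vecs_def pr1_def inj2_def pr3_def proj2_def pdim_eq)

lemma inj2_unitv: "j < m2 \<Longrightarrow> inj2 (unitv j) = unitv (m1 + j)"
  by (auto simp: inj2_def unitv_def fun_eq_iff)

lemma pbr_vecs: "pbr x y \<in> vecs pdim"
  unfolding vecs_def lie_br_def by (simp add: pc_vanish)

lemma pbr_eq_0: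
  assumes "\<And>i j k. v i \<noteq> 0 \<Longrightarrow> w j \<noteq> 0 \<Longrightarrow> pc i j k = 0"
  shows "pbr v w = 0"
proof
  fix k
  have "v i * w j * pc i j k = 0" for i j
    using assms[of i j k] by auto
  then show "pbr v w k = 0 k"
    by (simp add: lie_br_def del: mult_eq_0_iff)
qed

lemma pr1_pbr: "pr1 (pbr v w) = lie_br m1 c1 (pr1 v) (pr1 w)"
proof
  fix k
  show "pr1 (pbr v w) k = lie_br m1 c1 (pr1 v) (pr1 w) k"
  proof (cases "k < m1")
    case True
    have "pr1 (pbr v w) k = (\<Sum>i<pdim. \<Sum>j<pdim. v i * w j * pc i j k)"
      using True by (simp add: pr1_def lie_br_def)
    also have "\<dots> = (\<Sum>i<m1. \<Sum>j<m1. v (0 + i) * w (0 + j) * pc (0 + i) (0 + j) k)"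
      by (rule double_sum_restrict) (use True pc_low in \<open>auto simp: pdim_eq\<close>)
    also have "\<dots> = lie_br m1 c1 (pr1 v) (pr1 w) k"
      using True by (simp add: lie_br_def pr1_def pc_low)
    finally show ?thesis .
  qed (simp add: pr1_def lie_br_def is_lie_alg_vanish[OF lie1])
qed

lemma pr2_pbr: "pr2 (pbr v w) = lie_br m2 c2 (pr2 v) (pr2 w)"
proof
  fix k
  show "pr2 (pbr v w) k = lie_br m2 c2 (pr2 v) (pr2 w) k"
  proof (cases "k < m2")
    case True
    have "pr2 (pbr v w) k = (\<Sum>i<pdim. \<Sum>j<pdim. v i * w j * pc i j (m1 + k))"
      using True by (simp add: proj2_def lie_br_def)
    also have "\<dots> = (\<Sum>i<m2. \<Sum>j<m2. v (m1 + i) * w (m1 + j) * pc (m1 + i) (m1 + j) (m1 + k))"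
      by (rule double_sum_restrict) (use True pc_mid in \<open>auto simp: pdim_eq\<close>)
    also have "\<dots> = lie_br m2 c2 (pr2 v) (pr2 w) k"
      using True by (simp add: lie_br_def proj2_def pc_mid)
    finally show ?thesis .
  qed (simp add: proj2_def lie_br_def is_lie_alg_vanish[OF lie2])
qed

lemma pr3_pbr_eq_0:
  assumes "\<And>i j. v i \<noteq> 0 \<Longrightarrow> w j \<noteq> 0 \<Longrightarrow>
     \<not> ((i < n1 \<and> m1 \<le> j \<and> j < m1 + n2) \<or> (j < n1 \<and> m1 \<le> i \<and> i < m1 + n2))"
  shows "pr3 (pbr v w) = 0"
proof
  fix k
  show "pr3 (pbr v w) k = 0 k"
  proof (cases "m1 + m2 \<le> k")
    case True
    have "v i * w j * pc i j k = 0" for i j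
      using assms[of i j] pc_high_nonzero[OF True, of i j] by auto
    then show ?thesis by (simp add: pr3_def lie_br_def del: mult_eq_0_iff)
  qed (simp add: pr3_def)
qed

lemma pbr_gen_coord: "k < n1 \<or> (m1 \<le> k \<and> k < m1 + n2) \<Longrightarrow> pbr y z k = 0"
  by (simp add: lie_br_def pc_gen_coord)

lemma pbr_pr3_left [simp]: "pbr (pr3 v) w = 0"
  by (rule pbr_eq_0) (auto simp: pr3_def pc_high_left split: if_splits)

lemma pbr_pr3_right [simp]: "pbr w (pr3 v) = 0"
  by (rule pbr_eq_0) (auto simp: pr3_def pc_high_right split: if_splits)

lemma inj2_lcs1_support:
  assumes u: "u \<in> lcs m2 c2 1" and i: "inj2 u i \<noteq> 0"
  shows "m1 + n2 \<le> i"
proof -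
  have i1: "m1 \<le> i" and "u (i - m1) \<noteq> 0"
    using i by (auto simp: inj2_def split: if_splits)
  moreover have "\<forall>k<n2. u k = 0"
    using u unfolding lcs1_2_eq vecs_between_def by blast
  ultimately have "\<not> i - m1 < n2"
    by blast
  then show ?thesis
    using i1 by linarith
qed

lemma vecs1_support: "x \<in> vecs m1 \<Longrightarrow> x j \<noteq> 0 \<Longrightarrow> j < m1"
  unfolding vecs_def using not_le by blast

lemma pbr_inj2_lcs1_vecs1: "u \<in> lcs m2 c2 1 \<Longrightarrow> x \<in> vecs m1 \<Longrightarrow> pbr (inj2 u) x = 0"
  by (rule pbr_eq_0, rule pc_nongen2_left) (blast dest: inj2_lcs1_support vecs1_support)+

lemma pbr_vecs1: "x \<in> vecs m1 \<Longrightarrow> y \<in> vecs m1 \<Longrightarrow> pbr x y = lie_br m1 c1 x y"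
proof -
  assume x: "x \<in> vecs m1" and y: "y \<in> vecs m1"
  have "pr3 (pbr x y) = 0"
    by (rule pr3_pbr_eq_0) (use x y in \<open>auto simp: vecs_def\<close>)
  then show ?thesis
    using vec_decomp[OF pbr_vecs, of x y] pr1_pbr[of x y] pr2_pbr[of x y] x y by simp
qed

lemma pbr_inj2: "w1 \<in> vecs m2 \<Longrightarrow> w2 \<in> vecs m2 \<Longrightarrow> pbr (inj2 w1) (inj2 w2) = inj2 (lie_br m2 c2 w1 w2)"
proof -
  assume w1: "w1 \<in> vecs m2" and w2: "w2 \<in> vecs m2"
  have "pr3 (pbr (inj2 w1) (inj2 w2)) = 0"
    by (rule pr3_pbr_eq_0) (use n1_le_m1 in \<open>auto simp: inj2_def split: if_splits\<close>)
  then show ?thesis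
    using vec_decomp[OF pbr_vecs, of "inj2 w1" "inj2 w2"] pr1_pbr[of "inj2 w1" "inj2 w2"]
      pr2_pbr[of "inj2 w1" "inj2 w2"] w1 w2
    by simp
qed

lemma pbr_unitv_inj2_unitv:
  assumes i: "i < n1" and j: "j < n2"
  shows "pbr (unitv i) (inj2 (unitv j)) = unitv (m1 + m2 + i * n2 + j)"
proof
  fix k
  have "i < pdim" "m1 + j < pdim"
    using i j n1_le_m1 n2_le_m2 by (auto simp: pdim_eq)
  then have "pbr (unitv i) (inj2 (unitv j)) k = pc i (m1 + j) k"
    using j n2_le_m2 by (simp add: inj2_unitv lie_br_unitv)
  also have "\<dots> = unitv (m1 + m2 + i * n2 + j) k"
    using i j n1_le_m1 by (auto simp: prod_gen_def unitv_def)
  finally show "pbr (unitv i) (inj2 (unitv j)) k = unitv (m1 + m2 + i * n2 + j) k" .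
qed

lemma pbr_left_vecs1:
  assumes v: "v \<in> vecs pdim" and y: "y \<in> vecs m1" and "pr2 v \<in> lcs m2 c2 1"
  shows "pbr v y = lie_br m1 c1 (pr1 v) y"
proof -
  have "pbr v y = pbr (pr1 v + inj2 (pr2 v) + pr3 v) y"
    using vec_decomp[OF v] by simp
  also have "\<dots> = pbr (pr1 v) y"
    using pbr_inj2_lcs1_vecs1[OF assms(3) y] by (simp add: lie_br_add_left)
  finally show ?thesis
    using pbr_vecs1[OF pr1_vecs y] by simp
qed

lemma pbr_right_vecs1:
  assumes v: "v \<in> vecs pdim" and x: "x \<in> vecs m1"
  shows "pbr x v = lie_br m1 c1 x (pr1 v) + pbr x (inj2 (pr2 v))"
proof -
  have "pbr x v = pbr x (pr1 v + inj2 (pr2 v) + pr3 v)"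
    using vec_decomp[OF v] by simp
  then show ?thesis
    using pbr_vecs1[OF x pr1_vecs] by (simp add: lie_br_add_right)
qed

lemma pbr_right_inj2:
  assumes v: "v \<in> vecs pdim" and w: "w \<in> vecs m2"
  shows "pbr v (inj2 w) = pbr (pr1 v) (inj2 w) + inj2 (lie_br m2 c2 (pr2 v) w)"
proof -
  have "pbr v (inj2 w) = pbr (pr1 v + inj2 (pr2 v) + pr3 v) (inj2 w)"
    using vec_decomp[OF v] by simp
  then show ?thesis
    using pbr_inj2[OF pr2_vecs w] by (simp add: lie_br_add_left)
qed

lemma pbr_left_inj2_lcs1:
  assumes v: "v \<in> vecs pdim" and u: "u \<in> lcs m2 c2 1"
  shows "pbr (inj2 u) v = inj2 (lie_br m2 c2 u (pr2 v))"
proof -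
  have "pbr (inj2 u) v = pbr (inj2 u) (pr1 v + inj2 (pr2 v) + pr3 v)"
    using vec_decomp[OF v] by simp
  also have "\<dots> = pbr (inj2 u) (inj2 (pr2 v))"
    using pbr_inj2_lcs1_vecs1[OF u pr1_vecs] by (simp add: lie_br_add_right)
  finally show ?thesis
    using pbr_inj2[OF lcs1_2_vecs[OF u] pr2_vecs] by simp
qed

text \<open>The Jacobi identity holds componentwise: \<open>pr1\<close> and \<open>pr2\<close> are homomorphisms onto the factors,
  and double brackets have no central component since brackets vanish at the generator coordinates.\<close>

lemma prod_is_lie_alg: "is_lie_alg pdim pc"
  unfolding is_lie_alg_def
proof (intro conjI allI impI ballI)
  show "pc i j k = 0" if "pdim \<le> i \<or> pdim \<le> j \<or> pdim \<le> k" for i j k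
    using pc_vanish that by blast
  show "pc i j k = - pc j i k" for i j k
    by (rule pc_antisym)
  fix x y z assume x: "x \<in> vecs pdim" and y: "y \<in> vecs pdim" and z: "z \<in> vecs pdim"
  let ?J = "pbr x (pbr y z) + pbr y (pbr z x) + pbr z (pbr x y)"
  have "pr1 ?J = lie_br m1 c1 (pr1 x) (lie_br m1 c1 (pr1 y) (pr1 z))
      + lie_br m1 c1 (pr1 y) (lie_br m1 c1 (pr1 z) (pr1 x)) + lie_br m1 c1 (pr1 z) (lie_br m1 c1 (pr1 x) (pr1 y))"
    by (simp add: pr1_add pr1_pbr)
  also have "\<dots> = 0"
    by (rule is_lie_alg_jacobi[OF lie1 pr1_vecs pr1_vecs pr1_vecs])
  finally have 1: "pr1 ?J = 0" .
  have "pr2 ?J = lie_br m2 c2 (pr2 x) (lie_br m2 c2 (pr2 y) (pr2 z))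
      + lie_br m2 c2 (pr2 y) (lie_br m2 c2 (pr2 z) (pr2 x)) + lie_br m2 c2 (pr2 z) (lie_br m2 c2 (pr2 x) (pr2 y))"
    by (simp add: pr2_add pr2_pbr)
  also have "\<dots> = 0"
    by (rule is_lie_alg_jacobi[OF lie2 pr2_vecs pr2_vecs pr2_vecs])
  finally have 2: "pr2 ?J = 0" .
  have "pr3 (pbr u (pbr v w)) = 0" for u v w
    by (rule pr3_pbr_eq_0) (use pbr_gen_coord in blast)
  then have 3: "pr3 ?J = 0"
    by (simp add: pr3_add)
  have "?J \<in> vecs pdim"
    using pbr_vecs subspace_add[OF subspace_vecs] by metis
  then show "?J = 0"
    using vec_decomp 1 2 3 by fastforce
qed

definition lcs_bound :: "nat \<Rightarrow> (nat \<Rightarrow> complex) set" where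
  "lcs_bound k = {v \<in> vecs pdim. pr1 v \<in> lcs m1 c1 k \<and> pr2 v \<in> lcs m2 c2 k
     \<and> (\<forall>j. j < n1 \<or> (m1 \<le> j \<and> j < m1 + n2) \<longrightarrow> v j = 0) \<and> (2 \<le> k \<longrightarrow> pr3 v = 0)}"

lemma subspace_lcs_bound: "is_subspace (lcs_bound k)"
proof (rule is_subspaceI)
  show "0 \<in> lcs_bound k"
    using subspace_zero[OF subspace_lcs] subspace_zero[OF subspace_vecs]
    by (auto simp: lcs_bound_def pr1_def proj2_def pr3_def zero_fun_def)
next
  fix a x y assume "x \<in> lcs_bound k" "y \<in> lcs_bound k"
  then show "(\<lambda>k. a * x k + y k) \<in> lcs_bound k"
    using subspace_lincomb[OF subspace_lcs] subspace_lincomb[OF subspace_vecs]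
    by (auto simp: lcs_bound_def pr1_lincomb pr2_lincomb pr3_lincomb zero_fun_def[symmetric])
qed

lemma lcs_subset_bound: "1 \<le> k \<Longrightarrow> lcs pdim pc k \<subseteq> lcs_bound k"
proof (induction k rule: dec_induct)
  case base
  have "pbr x y \<in> lcs_bound 1" for x y
    using pbr_vecs pbr_gen_coord lie_br_in_lcs1[OF pr1_vecs pr1_vecs] lie_br_in_lcs1[OF pr2_vecs pr2_vecs]
    by (simp add: lcs_bound_def pr1_pbr pr2_pbr)
  then show ?case
    using lcs_Suc_subset[OF subspace_lcs_bound, of pdim pc 0] by simp
next
  case (step k)
  have "pbr x y \<in> lcs_bound (Suc k)" if "y \<in> lcs pdim pc k" for x y
  proof -
    have y: "y \<in> lcs_bound k" using step.IH that by blast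
    have "pr1 (pbr x y) \<in> lcs m1 c1 (Suc k)" "pr2 (pbr x y) \<in> lcs m2 c2 (Suc k)"
      using y pr1_vecs pr2_vecs unfolding pr1_pbr pr2_pbr lcs_bound_def
      by (auto intro: lie_br_in_lcs_Suc)
    moreover have "pr3 (pbr x y) = 0"
      by (rule pr3_pbr_eq_0) (use y in \<open>auto simp: lcs_bound_def\<close>)
    ultimately show ?thesis
      using pbr_vecs pbr_gen_coord by (simp add: lcs_bound_def)
  qed
  then show ?case
    by (intro lcs_Suc_subset[OF subspace_lcs_bound]) simp
qed

lemma prod_nilpotent:
  assumes "lie_nilpotent m1 c1" "lie_nilpotent m2 c2"
  shows "lie_nilpotent pdim pc"
proof -
  obtain a b where a: "lcs m1 c1 a = {0}" and b: "lcs m2 c2 b = {0}"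
    using assms by (auto simp: lie_nilpotent_def)
  let ?K = "a + b + 2"
  have "lcs m1 c1 ?K = {0}" "lcs m2 c2 ?K = {0}"
    using lcs_eq_zero_mono[OF a] lcs_eq_zero_mono[OF b] by auto
  then have "v = 0" if "v \<in> lcs pdim pc ?K" for v
    using that lcs_subset_bound[of ?K] vec_decomp[of v] by (force simp: lcs_bound_def)
  then have "lcs pdim pc ?K = {0}"
    using subspace_zero[OF subspace_lcs] by blast
  then show ?thesis
    unfolding lie_nilpotent_def by blast
qed

end

section \<open>Derivations of the product\<close>

locale prod_derivations = prod_by_generators +
  fixes k :: nat
  assumes S1: "\<And>D x. is_derivation (prod_dim m1 n1 m2 n2) (prod_gen m1 n1 c1 m2 n2 c2) D \<Longrightarrow>
      x \<in> vecs m1 \<Longrightarrow> proj2 m1 m2 (D x) \<in> lcs m2 c2 1"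
    and killed1: "vecs m1 \<subseteq> der_killed m1 c1 k"
    and killed2: "vecs m2 \<subseteq> der_killed m2 c2 k"
begin

abbreviation "Der D \<equiv> is_derivation pdim pc D"
abbreviation "killed a \<equiv> der_killed pdim pc a"

lemma derivation_block1:
  assumes D: "Der D"
  shows "is_derivation m1 c1 (\<lambda>x. pr1 (D x))"
proof (rule is_derivationI)
  fix a x y assume x: "x \<in> vecs m1" and y: "y \<in> vecs m1"
  show "pr1 (D (\<lambda>k. a * x k + y k)) = (\<lambda>k. a * pr1 (D x) k + pr1 (D y) k)"
    using derivation_lincomb[OF D vecs1_vecs[OF x] vecs1_vecs[OF y]] by (simp add: pr1_lincomb)
  have "pr1 (D (lie_br m1 c1 x y)) = pr1 (D (pbr x y))"
    by (simp add: pbr_vecs1[OF x y])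
  also have "\<dots> = lie_br m1 c1 (pr1 (D x)) y + lie_br m1 c1 x (pr1 (D y))"
    using x y by (simp add: derivation_lie_br[OF D vecs1_vecs[OF x] vecs1_vecs[OF y]] pr1_add pr1_pbr)
  finally show "pr1 (D (lie_br m1 c1 x y)) = lie_br m1 c1 (pr1 (D x)) y + lie_br m1 c1 x (pr1 (D y))" .
qed (rule pr1_vecs)

lemma derivation_block2:
  assumes D: "Der D"
  shows "is_derivation m2 c2 (\<lambda>w. pr2 (D (inj2 w)))"
proof (rule is_derivationI)
  fix a x y assume x: "x \<in> vecs m2" and y: "y \<in> vecs m2"
  show "pr2 (D (inj2 (\<lambda>k. a * x k + y k))) = (\<lambda>k. a * pr2 (D (inj2 x)) k + pr2 (D (inj2 y)) k)"
    using derivation_lincomb[OF D inj2_vecs inj2_vecs, of a x y] by (simp add: pr2_lincomb inj2_lincomb)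
  have "pr2 (D (inj2 (lie_br m2 c2 x y))) = pr2 (D (pbr (inj2 x) (inj2 y)))"
    by (simp add: pbr_inj2[OF x y])
  also have "\<dots> = lie_br m2 c2 (pr2 (D (inj2 x))) y + lie_br m2 c2 x (pr2 (D (inj2 y)))"
    using x y by (simp add: derivation_lie_br[OF D inj2_vecs inj2_vecs] pr2_add pr2_pbr)
  finally show "pr2 (D (inj2 (lie_br m2 c2 x y)))
      = lie_br m2 c2 (pr2 (D (inj2 x))) y + lie_br m2 c2 x (pr2 (D (inj2 y)))" .
qed (rule pr2_vecs)

text \<open>This is where the S-algebra property of \<open>g\<^sub>1\<close> enters: it makes the \<open>g\<^sub>2\<close>-component of \<open>D x\<close>
  commute with \<open>g\<^sub>1\<close>.\<close>

lemma derivation_lcs1_1_vecs1: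
  assumes D: "Der D" and y: "y \<in> lcs m1 c1 1"
  shows "D y \<in> vecs m1"
proof -
  have "lcs m1 c1 (Suc 0) \<subseteq> {v \<in> vecs pdim. D v \<in> vecs m1}"
  proof (rule lcs_Suc_subset)
    show "is_subspace {v \<in> vecs pdim. D v \<in> vecs m1}"
      by (rule subspace_preimage[OF subspace_vecs subspace_vecs derivation_lincomb[OF D]])
  next
    fix x z assume x: "x \<in> vecs m1" and "z \<in> lcs m1 c1 0"
    then have z: "z \<in> vecs m1" by simp
    have "D (pbr x z) = pbr (D x) z + pbr x (D z)"
      by (rule derivation_lie_br[OF D vecs1_vecs[OF x] vecs1_vecs[OF z]])
    also have "pbr x (D z) = - pbr (D z) x"
      by (rule lie_br_antisym) (rule pc_antisym)
    also have "pbr (D x) z = lie_br m1 c1 (pr1 (D x)) z"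
      by (rule pbr_left_vecs1[OF derivation_vecs[OF D vecs1_vecs[OF x]] z S1[OF D x]])
    also have "pbr (D z) x = lie_br m1 c1 (pr1 (D z)) x"
      by (rule pbr_left_vecs1[OF derivation_vecs[OF D vecs1_vecs[OF z]] x S1[OF D z]])
    finally have "D (pbr x z) = lie_br m1 c1 (pr1 (D x)) z + - lie_br m1 c1 (pr1 (D z)) x" .
    then have "D (pbr x z) \<in> vecs m1"
      using lie_br_vecs[OF lie1] by (simp add: vecs_def)
    then show "lie_br m1 c1 x z \<in> {v \<in> vecs pdim. D v \<in> vecs m1}"
      using pbr_vecs[of x z] unfolding pbr_vecs1[OF x z] by simp
  qed
  then show ?thesis
    using y by auto
qed

lemma pr1_derivation_inj2_lcs1:
  assumes D: "Der D" and u: "u \<in> lcs m2 c2 1"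
  shows "pr1 (D (inj2 u)) = 0"
proof -
  have "lcs m2 c2 (Suc 0) \<subseteq> {v \<in> vecs m2. pr1 (D (inj2 v)) \<in> {0}}"
  proof (rule lcs_Suc_subset)
    show "is_subspace {v \<in> vecs m2. pr1 (D (inj2 v)) \<in> {0}}"
      by (rule subspace_preimage[OF subspace_vecs])
        (auto simp: is_subspace_def zero_fun_def[symmetric]
          derivation_lincomb[OF D inj2_vecs inj2_vecs] inj2_lincomb pr1_lincomb)
  next
    fix x z assume x: "x \<in> vecs m2" and "z \<in> lcs m2 c2 0"
    then have z: "z \<in> vecs m2" by simp
    have "pr1 (D (inj2 (lie_br m2 c2 x z))) = pr1 (D (pbr (inj2 x) (inj2 z)))"
      by (simp add: pbr_inj2[OF x z])
    also have "\<dots> = 0"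
      by (simp add: derivation_lie_br[OF D inj2_vecs inj2_vecs] pr1_add pr1_pbr)
    finally show "lie_br m2 c2 x z \<in> {v \<in> vecs m2. pr1 (D (inj2 v)) \<in> {0}}"
      using lie_br_vecs[OF lie2] by simp
  qed
  then show ?thesis
    using u by auto
qed

lemma pr1_derivation_lcs1:
  "Der D \<Longrightarrow> y \<in> lcs m1 c1 1 \<Longrightarrow> pr1 (D y) \<in> lcs m1 c1 1"
  using derivation_lcs1[OF lie1 derivation_block1] by simp

lemma pr2_derivation_lcs1:
  "Der D \<Longrightarrow> u \<in> lcs m2 c2 1 \<Longrightarrow> pr2 (D (inj2 u)) \<in> lcs m2 c2 1"
  using derivation_lcs1[OF lie2 derivation_block2] by simp

lemma pr1_derivation_killed:
  "Der D \<Longrightarrow> x \<in> der_killed m1 c1 (Suc a) \<Longrightarrow> pr1 (D x) \<in> der_killed m1 c1 a"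
  using der_killed_SucD[OF derivation_block1] by simp

lemma pr2_derivation_killed:
  "Der D \<Longrightarrow> w \<in> der_killed m2 c2 (Suc a) \<Longrightarrow> pr2 (D (inj2 w)) \<in> der_killed m2 c2 a"
  using der_killed_SucD[OF derivation_block2] by simp

lemma derivation_inj2_lie_br:
  assumes D: "Der D" and u: "u \<in> lcs m2 c2 1" and w: "w \<in> vecs m2"
  shows "D (inj2 (lie_br m2 c2 u w))
    = inj2 (lie_br m2 c2 (pr2 (D (inj2 u))) w) + inj2 (lie_br m2 c2 u (pr2 (D (inj2 w))))"
proof -
  have "D (inj2 (lie_br m2 c2 u w)) = pbr (D (inj2 u)) (inj2 w) + pbr (inj2 u) (D (inj2 w))"
    using derivation_lie_br[OF D inj2_vecs inj2_vecs, of u w] by (simp add: pbr_inj2[OF lcs1_2_vecs[OF u] w])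
  also have "pbr (D (inj2 u)) (inj2 w) = inj2 (lie_br m2 c2 (pr2 (D (inj2 u))) w)"
    using pbr_right_inj2[OF derivation_vecs[OF D inj2_vecs] w] pr1_derivation_inj2_lcs1[OF D u] by simp
  also have "pbr (inj2 u) (D (inj2 w)) = inj2 (lie_br m2 c2 u (pr2 (D (inj2 w))))"
    by (rule pbr_left_inj2_lcs1[OF derivation_vecs[OF D inj2_vecs] u])
  finally show ?thesis .
qed

lemma derivation_pbr_inj2:
  assumes D: "Der D" and x: "x \<in> vecs m1" and w: "w \<in> vecs m2"
  shows "D (pbr x (inj2 w))
    = pbr (pr1 (D x)) (inj2 w) + inj2 (lie_br m2 c2 (pr2 (D x)) w)
      + lie_br m1 c1 x (pr1 (D (inj2 w))) + pbr x (inj2 (pr2 (D (inj2 w))))"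
proof -
  have "D (pbr x (inj2 w)) = pbr (D x) (inj2 w) + pbr x (D (inj2 w))"
    by (rule derivation_lie_br[OF D vecs1_vecs[OF x] inj2_vecs])
  then show ?thesis
    using pbr_right_inj2[OF derivation_vecs[OF D vecs1_vecs[OF x]] w]
      pbr_right_vecs1[OF derivation_vecs[OF D inj2_vecs] x]
    by (simp add: add.assoc)
qed

lemma killed_decomp:
  assumes "v \<in> vecs pdim" "pr1 v \<in> killed a" "inj2 (pr2 v) \<in> killed a" "pr3 v \<in> killed a"
  shows "v \<in> killed a"
  using assms subspace_add[OF subspace_der_killed] vec_decomp by metis

lemma killed_lcs1_1:
  assumes "y \<in> lcs m1 c1 1" and "y \<in> der_killed m1 c1 a"
  shows "y \<in> killed a"
  using assms
proof (induction a arbitrary: y)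
  case 0
  then show ?case by (simp add: zero_fun_def[symmetric])
next
  case (Suc a)
  show ?case
  proof (rule der_killed_SucI)
    show "y \<in> vecs pdim"
      using vecs1_vecs der_killed_vecs Suc.prems(2) by blast
    fix D assume D: "Der D"
    have "pr1 (D y) \<in> killed a"
      using Suc.IH pr1_derivation_lcs1[OF D Suc.prems(1)] pr1_derivation_killed[OF D Suc.prems(2)] .
    then show "D y \<in> killed a"
      using derivation_lcs1_1_vecs1[OF D Suc.prems(1)] by simp
  qed
qed

lemma killed_inj2_lie_br:
  assumes "u \<in> lcs m2 c2 1" "u \<in> der_killed m2 c2 a" "w \<in> der_killed m2 c2 b"
  shows "inj2 (lie_br m2 c2 u w) \<in> killed (a + b)"
  using assms
proof (induction "a + b" arbitrary: a b u w rule: less_induct)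
  case less
  show ?case
  proof (cases "a = 0 \<or> b = 0")
    case True
    then have "u = 0 \<or> w = 0"
      using less.prems by (auto simp: zero_fun_def[symmetric])
    then show ?thesis
      using subspace_zero[OF subspace_der_killed] by auto
  next
    case False
    then obtain a' b' where a: "a = Suc a'" and b: "b = Suc b'"
      using not0_implies_Suc by blast
    show ?thesis
      unfolding a add_Suc
    proof (rule der_killed_SucI[OF inj2_vecs])
      fix D assume D: "Der D"
      have "inj2 (lie_br m2 c2 (pr2 (D (inj2 u))) w) \<in> killed (a' + b)"
        using less.hyps[of a' b] pr2_derivation_lcs1[OF D] pr2_derivation_killed[OF D] less.prems a
        by simp
      moreover have "inj2 (lie_br m2 c2 u (pr2 (D (inj2 w)))) \<in> killed (a' + b)"
        using less.hyps[of a b'] pr2_derivation_killed[OF D] less.prems a b by simp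
      ultimately show "D (inj2 (lie_br m2 c2 u w)) \<in> killed (a' + b)"
        using less.prems der_killed_vecs subspace_add[OF subspace_der_killed]
        by (simp add: derivation_inj2_lie_br[OF D])
    qed
  qed
qed

lemma killed_pbr_inj2:
  assumes "x \<in> der_killed m1 c1 a" "w \<in> der_killed m2 c2 b"
  shows "pbr x (inj2 w) \<in> killed (a + b + 2 * k)"
  using assms
proof (induction "a + b" arbitrary: a b x w rule: less_induct)
  case less
  show ?case
  proof (cases "a = 0 \<or> b = 0")
    case True
    then have "x = 0 \<or> w = 0"
      using less.prems by (auto simp: zero_fun_def[symmetric])
    then show ?thesis
      using subspace_zero[OF subspace_der_killed] by auto
  next
    case False
    then obtain a' b' where a: "a = Suc a'" and b: "b = Suc b'"
      using not0_implies_Suc by blast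
    have x: "x \<in> vecs m1" and w: "w \<in> vecs m2"
      using less.prems der_killed_vecs by blast+
    let ?n = "a' + b + 2 * k"
    show ?thesis
      unfolding a add_Suc
    proof (rule der_killed_SucI[OF pbr_vecs])
      fix D assume D: "Der D"
      have 1: "pbr (pr1 (D x)) (inj2 w) \<in> killed ?n"
        using less.hyps[of a' b] pr1_derivation_killed[OF D] less.prems a by simp
      have "pr2 (D x) \<in> lcs m2 c2 1" "pr2 (D x) \<in> der_killed m2 c2 k" "w \<in> der_killed m2 c2 k"
        using S1[OF D x] killed2 pr2_vecs w by blast+
      then have "inj2 (lie_br m2 c2 (pr2 (D x)) w) \<in> killed (k + k)"
        by (rule killed_inj2_lie_br)
      then have 2: "inj2 (lie_br m2 c2 (pr2 (D x)) w) \<in> killed ?n"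
        by (rule der_killed_mono) simp
      have "lie_br m1 c1 x (pr1 (D (inj2 w))) \<in> killed k"
        using killed_lcs1_1 lie_br_in_lcs1[OF x pr1_vecs] killed1 lie_br_vecs[OF lie1] by blast
      then have 3: "lie_br m1 c1 x (pr1 (D (inj2 w))) \<in> killed ?n"
        by (rule der_killed_mono) simp
      have 4: "pbr x (inj2 (pr2 (D (inj2 w)))) \<in> killed ?n"
        using less.hyps[of a b'] pr2_derivation_killed[OF D] less.prems a b by simp
      show "D (pbr x (inj2 w)) \<in> killed ?n"
        unfolding derivation_pbr_inj2[OF D x w] using 1 2 3 4
        by (intro subspace_add[OF subspace_der_killed])
    qed
  qed
qed

text \<open>The new central coordinates are spanned by the brackets \<open>[X\<^sub>i, X'\<^sub>j]\<close> of generators.\<close>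

lemma killed_pr3:
  assumes v: "v \<in> vecs pdim"
  shows "pr3 v \<in> killed (4 * k)"
proof -
  have "pr3 v \<in> cspan (unitv ` {m1 + m2..<pdim})"
    using v by (intro in_cspan_unitv) (auto simp: vecs_def pr3_def)
  moreover have "unitv ` {m1 + m2..<pdim} \<subseteq> killed (4 * k)"
  proof
    fix u assume "u \<in> unitv ` {m1 + m2..<pdim}"
    then obtain q where u: "u = unitv (m1 + m2 + q)" and q: "q < n1 * n2"
      by (auto simp: pdim_eq) (metis add_less_cancel_left le_Suc_ex)
    then have n2: "0 < n2"
      by (cases n2) auto
    have i: "q div n2 < n1" and j: "q mod n2 < n2"
      using q n2 by (simp_all add: less_mult_imp_div_less)
    have "unitv (q div n2) \<in> der_killed m1 c1 k" "unitv (q mod n2) \<in> der_killed m2 c2 k"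
      using killed1 killed2 i j n1_le_m1 n2_le_m2 by (auto simp: vecs_def unitv_def)
    then have "pbr (unitv (q div n2)) (inj2 (unitv (q mod n2))) \<in> killed (k + k + 2 * k)"
      by (rule killed_pbr_inj2)
    then show "u \<in> killed (4 * k)"
      using pbr_unitv_inj2_unitv[OF i j] u by (simp add: add.commute)
  qed
  ultimately show ?thesis
    using cspan_subset[OF subspace_der_killed] by blast
qed

lemma killed_inj2_lcs1:
  assumes "u \<in> lcs m2 c2 1" "u \<in> der_killed m2 c2 a"
  shows "inj2 u \<in> killed (a + 4 * k)"
  using assms
proof (induction a arbitrary: u)
  case 0
  then show ?case
    using subspace_zero[OF subspace_der_killed] by (simp add: zero_fun_def[symmetric])
next
  case (Suc a)
  show ?case
    unfolding add_Suc
  proof (rule der_killed_SucI[OF inj2_vecs])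
    fix D assume D: "Der D"
    have Du: "D (inj2 u) \<in> vecs pdim"
      by (rule derivation_vecs[OF D inj2_vecs])
    have "inj2 (pr2 (D (inj2 u))) \<in> killed (a + 4 * k)"
      using Suc.IH pr2_derivation_lcs1[OF D Suc.prems(1)] pr2_derivation_killed[OF D Suc.prems(2)] .
    moreover have "pr3 (D (inj2 u)) \<in> killed (a + 4 * k)"
      using killed_pr3[OF Du] by (rule der_killed_mono) simp
    ultimately show "D (inj2 u) \<in> killed (a + 4 * k)"
      using pr1_derivation_inj2_lcs1[OF D Suc.prems(1)] subspace_zero[OF subspace_der_killed]
      by (intro killed_decomp[OF Du]) simp_all
  qed
qed

lemma killed_vecs1:
  assumes "x \<in> der_killed m1 c1 a"
  shows "x \<in> killed (a + 5 * k)"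
  using assms
proof (induction a arbitrary: x)
  case 0
  then show ?case
    using subspace_zero[OF subspace_der_killed] by (simp add: zero_fun_def[symmetric])
next
  case (Suc a)
  have x: "x \<in> vecs m1"
    using Suc.prems der_killed_vecs by blast
  show ?case
    unfolding add_Suc
  proof (rule der_killed_SucI[OF vecs1_vecs[OF x]])
    fix D assume D: "Der D"
    have Dx: "D x \<in> vecs pdim"
      by (rule derivation_vecs[OF D vecs1_vecs[OF x]])
    have 1: "pr1 (D x) \<in> killed (a + 5 * k)"
      by (rule Suc.IH[OF pr1_derivation_killed[OF D Suc.prems]])
    have "pr2 (D x) \<in> lcs m2 c2 1" "pr2 (D x) \<in> der_killed m2 c2 k"
      using S1[OF D x] killed2 pr2_vecs by blast+
    then have "inj2 (pr2 (D x)) \<in> killed (k + 4 * k)"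
      by (rule killed_inj2_lcs1)
    then have 2: "inj2 (pr2 (D x)) \<in> killed (a + 5 * k)"
      by (rule der_killed_mono) simp
    have 3: "pr3 (D x) \<in> killed (a + 5 * k)"
      using killed_pr3[OF Dx] by (rule der_killed_mono) simp
    show "D x \<in> killed (a + 5 * k)"
      using Dx 1 2 3 by (rule killed_decomp)
  qed
qed

lemma killed_inj2:
  assumes "w \<in> der_killed m2 c2 b"
  shows "inj2 w \<in> killed (b + 6 * k)"
  using assms
proof (induction b arbitrary: w)
  case 0
  then show ?case
    using subspace_zero[OF subspace_der_killed] by (simp add: zero_fun_def[symmetric])
next
  case (Suc b)
  show ?case
    unfolding add_Suc
  proof (rule der_killed_SucI[OF inj2_vecs])
    fix D assume D: "Der D"
    have Dw: "D (inj2 w) \<in> vecs pdim"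
      by (rule derivation_vecs[OF D inj2_vecs])
    have "pr1 (D (inj2 w)) \<in> killed (k + 5 * k)"
      using killed1 pr1_vecs by (intro killed_vecs1) blast
    then have 1: "pr1 (D (inj2 w)) \<in> killed (b + 6 * k)"
      by (rule der_killed_mono) simp
    have 2: "inj2 (pr2 (D (inj2 w))) \<in> killed (b + 6 * k)"
      by (rule Suc.IH[OF pr2_derivation_killed[OF D Suc.prems]])
    have 3: "pr3 (D (inj2 w)) \<in> killed (b + 6 * k)"
      using killed_pr3[OF Dw] by (rule der_killed_mono) simp
    show "D (inj2 w) \<in> killed (b + 6 * k)"
      using Dw 1 2 3 by (rule killed_decomp)
  qed
qed

lemma vecs_killed: "vecs pdim \<subseteq> killed (7 * k)"
proof
  fix v assume v: "v \<in> vecs pdim"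
  have "pr1 v \<in> killed (k + 5 * k)"
    using killed1 pr1_vecs by (intro killed_vecs1) blast
  then have 1: "pr1 v \<in> killed (7 * k)"
    by (rule der_killed_mono) simp
  have "inj2 (pr2 v) \<in> killed (k + 6 * k)"
    using killed2 pr2_vecs by (intro killed_inj2) blast
  then have 2: "inj2 (pr2 v) \<in> killed (7 * k)"
    by simp
  have 3: "pr3 v \<in> killed (7 * k)"
    using killed_pr3[OF v] by (rule der_killed_mono) simp
  show "v \<in> killed (7 * k)"
    using v 1 2 3 by (rule killed_decomp)
qed

end

theorem mainTheorem1:
  fixes m1 n1 m2 n2 :: nat
    and c1 c2 :: "nat \<Rightarrow> nat \<Rightarrow> nat \<Rightarrow> complex"
  assumes "is_lie_alg m1 c1" "lie_nilpotent m1 c1" "lie_nonabelian m1 c1" "adapted m1 n1 c1"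
    and "is_lie_alg m2 c2" "lie_nilpotent m2 c2" "lie_nonabelian m2 c2" "adapted m2 n2 c2"
    and "char_nilpotent m1 c1" "char_nilpotent m2 c2"
    and "S_algebra m1 n1 c1" "S_algebra m2 n2 c2"
  shows "char_nilpotent (prod_dim m1 n1 m2 n2) (prod_gen m1 n1 c1 m2 n2 c2)"
proof -
  interpret prod_by_generators m1 n1 c1 m2 n2 c2
    using assms by unfold_locales
  obtain k1 k2 where "vecs m1 \<subseteq> der_killed m1 c1 k1" "vecs m2 \<subseteq> der_killed m2 c2 k2"
    using assms(9,10) by (auto simp: char_nilpotent_iff_killed)
  then have "vecs m1 \<subseteq> der_killed m1 c1 (k1 + k2)" "vecs m2 \<subseteq> der_killed m2 c2 (k1 + k2)"
    using der_killed_mono by (meson le_add1 le_add2 subset_iff)+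
  moreover have "pr2 (D x) \<in> lcs m2 c2 1" if "is_derivation pdim pc D" "x \<in> vecs m1" for D x
    using assms(11) assms(5-8) that unfolding S_algebra_def by blast
  ultimately interpret prod_derivations m1 n1 c1 m2 n2 c2 "k1 + k2"
    by unfold_locales
  show ?thesis
    unfolding char_nilpotent_iff_killed
    using prod_is_lie_alg prod_nilpotent[OF assms(2,6)] vecs_killed by blast
qed

end
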